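(* Consider a distributed storage system $\mathrm{DSS}(n,k,d,h,\alpha,\alpha',\beta,M)$ with $1\le k\le d\le n-1$, $h\ge 0$. Then in its information flow graph there exist a sequence of $k$ failures/repairs and a data collector whose minimum $S$–$\mathrm{DC}$ cut has capacity at most $$\sum_{i=0}^{k-1}\min\{\alpha,\,(d+h-i)\beta\}.$$ Consequently, if every data collector can reconstruct the file of size $M$ under all failure/repair sequences, then $\sum_{i=0}^{k-1}\min\{\alpha,(d+h-i)\beta\}\ge M$.
   Context: $\mathrm{DSS}(n,k,d,h,\alpha,\alpha',\beta,M)$: a file of $M$ packets is stored on $n$ complete storage nodes of capacity $\alpha$ each so that any $k$ of them reconstruct the file; in addition there are $h$ repairing storage nodes of capacity $\alpha'<\alpha$, which receive data from the source, never fail and are never contacted by data collectors. When a complete node fails, a new node is created receiving $\beta$ packets from each of $d$ surviving complete nodes and from each of the $h$ repairing nodes. Information flow graph: source $S$; each complete node $x$ is a pair $x_{in}\to x_{out}$ with capacity $\alpha$, initial nodes have edges $S\to x_{in}$; each repairing node $r$ is a pair $r_{in}\to r_{out}$ with capacity $\alpha'$ and edge $S\to r_{in}$; at each repair the new node $y$ gets edges of capacity $\beta$ from $x_{out}$ of the $d$ chosen active complete nodes and from $r_{out}$ of all $h$ repairing nodes; a data collector has infinite-capacity edges from the out-vertices of some $k$ active complete nodes. *)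

theory Defs
  imports "HOL-Library.Extended_Real"
begin

text \<open>Complete storage nodes are indexed
 by nat: initial nodes are 0..n-1, the node created at the t-th repair (t = 0,1,...)
 is n + t. Repairing nodes are indexed 0..h-1.\<close>
datatype vtx = Src | In nat | Out nat | RIn nat | ROut nat | DC

text \<open>A failure/repair step is a pair (failed node, set of d helper complete nodes).\<close>
type_synonym step = "nat \<times> nat set"

primrec valid_from :: "nat \<Rightarrow> nat \<Rightarrow> nat set \<Rightarrow> step list \<Rightarrow> bool" where
  "valid_from d nxt A [] = True"
| "valid_from d nxt A (s # ss) =
     (fst s \<in> A \<and> snd s \<subseteq> A - {fst s} \<and> card (snd s) = d \<and>
      valid_from d (Suc nxt) (insert nxt (A - {fst s})) ss)"

primrec active_from :: "nat \<Rightarrow> nat set \<Rightarrow> step list \<Rightarrow> nat set" where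
  "active_from nxt A [] = A"
| "active_from nxt A (s # ss) = active_from (Suc nxt) (insert nxt (A - {fst s})) ss"

definition valid_seq :: "nat \<Rightarrow> nat \<Rightarrow> step list \<Rightarrow> bool" where
  "valid_seq n d seq = valid_from d n {0..<n} seq"

definition active :: "nat \<Rightarrow> step list \<Rightarrow> nat set" where
  "active n seq = active_from n {0..<n} seq"

text \<open>Edges (tail, head, capacity) of the information flow graph after the
 repairs in seq, with a data collector attached to the complete nodes in K.\<close>
definition flow_edges ::
  "nat \<Rightarrow> nat \<Rightarrow> real \<Rightarrow> real \<Rightarrow> real \<Rightarrow> step list \<Rightarrow> nat set \<Rightarrow> (vtx \<times> vtx \<times> ereal) set" where
  "flow_edges n h \<alpha> \<alpha>' \<beta> seq K =
     {(Src, In i, ereal \<alpha>) | i. i < n}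
   \<union> {(In x, Out x, ereal \<alpha>) | x. x < n + length seq}
   \<union> {(Src, RIn r, ereal \<alpha>') | r. r < h}
   \<union> {(RIn r, ROut r, ereal \<alpha>') | r. r < h}
   \<union> {(Out x, In (n + t), ereal \<beta>) | x t. t < length seq \<and> x \<in> snd (seq ! t)}
   \<union> {(ROut r, In (n + t), ereal \<beta>) | r t. r < h \<and> t < length seq}
   \<union> {(Out x, DC, \<infinity>) | x. x \<in> K}"

definition cut_value :: "(vtx \<times> vtx \<times> ereal) set \<Rightarrow> vtx set \<Rightarrow> ereal" where
  "cut_value E S = (\<Sum>e \<in> {e \<in> E. fst e \<in> S \<and> fst (snd e) \<notin> S}. snd (snd e))"

definition min_cut :: "(vtx \<times> vtx \<times> ereal) set \<Rightarrow> ereal" where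
  "min_cut E = (INF S \<in> {S. Src \<in> S \<and> DC \<notin> S}. cut_value E S)"

end

theory Submission
  imports Defs
begin

(* We exhibit one "staircase" failure/repair sequence: at step t (t < k) the
   initial node t fails, and the newcomer n + t downloads from the d helpers
   t+1, ..., d (initial nodes still alive) and n, ..., n+t-1 (earlier
   newcomers), plus all h repairing nodes.  A data collector attaches to the
   k newcomers n, ..., n+k-1.  For the t-th newcomer we cut either its storage
   edge In -> Out (capacity alpha) or, when this is cheaper, all of its
   incoming edges that do not come from earlier newcomers: these are d - t
   helper edges and h repairing edges of capacity beta each.  The resulting
   cut separates Src from DC and costs at most
   sum_{t<k} min alpha ((d+h-t) beta), which bounds the minimum cut. *)

definition helpers :: "nat \<Rightarrow> nat \<Rightarrow> nat \<Rightarrow> nat set" where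
  "helpers n d t = {Suc t..<Suc d} \<union> {n..<n+t}"

definition staircase :: "nat \<Rightarrow> nat \<Rightarrow> nat \<Rightarrow> step list" where
  "staircase n d k = map (\<lambda>t. (t, helpers n d t)) [0..<k]"

lemma card_helpers:
  assumes "t \<le> d" "d < n"
  shows "card (helpers n d t) = d"
  unfolding helpers_def using assms by (subst card_Un_disjoint) auto

lemma staircase_suffix:
  assumes "t \<le> k" "k \<le> d" "d < n"
  shows "valid_from d (n+t) ({t..<n} \<union> {n..<n+t}) (map (\<lambda>j. (j, helpers n d j)) [t..<k]) \<and>
         active_from (n+t) ({t..<n} \<union> {n..<n+t}) (map (\<lambda>j. (j, helpers n d j)) [t..<k])
           = {k..<n} \<union> {n..<n+k}"
  using assms
proof (induction "k - t" arbitrary: t)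
  case 0
  then show ?case by simp
next
  case (Suc m)
  then have "t < k" by simp
  have unfold: "[t..<k] = t # [Suc t..<k]"
    using \<open>t < k\<close> by (simp add: upt_conv_Cons)
  have next_active: "insert (n+t) (({t..<n} \<union> {n..<n+t}) - {t}) = {Suc t..<n} \<union> {n..<n+Suc t}"
    using \<open>t < k\<close> Suc.prems by auto
  have helpers_alive: "helpers n d t \<subseteq> ({t..<n} \<union> {n..<n+t}) - {t}"
    using Suc.prems \<open>t < k\<close> unfolding helpers_def by auto
  have "card (helpers n d t) = d"
    using card_helpers Suc.prems \<open>t < k\<close> by simp
  moreover have "valid_from d (n+Suc t) ({Suc t..<n} \<union> {n..<n+Suc t})
                   (map (\<lambda>j. (j, helpers n d j)) [Suc t..<k]) \<and>
         active_from (n+Suc t) ({Suc t..<n} \<union> {n..<n+Suc t})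
                   (map (\<lambda>j. (j, helpers n d j)) [Suc t..<k]) = {k..<n} \<union> {n..<n+k}"
    using Suc.hyps(1)[of "Suc t"] Suc.hyps(2) Suc.prems \<open>t < k\<close> by simp
  ultimately show ?case
    using next_active helpers_alive \<open>t < k\<close> Suc.prems by (simp add: unfold)
qed

lemma staircase_valid:
  assumes "k \<le> d" "d < n"
  shows "valid_seq n d (staircase n d k)"
    and "active n (staircase n d k) = {k..<n} \<union> {n..<n+k}"
  using staircase_suffix[of 0 k d n] assms
  unfolding valid_seq_def active_def staircase_def by simp_all

lemma min_cut_le_cut_value:
  assumes "Src \<in> S" "DC \<notin> S"
  shows "min_cut E \<le> cut_value E S"
  unfolding min_cut_def by (rule INF_lower) (use assms in simp)

lemma cut_value_le_sum:
  assumes "{e \<in> E. fst e \<in> S \<and> fst (snd e) \<notin> S} \<subseteq> F" "finite F"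
    and "\<And>e. e \<in> F \<Longrightarrow> 0 \<le> snd (snd e)"
  shows "cut_value E S \<le> (\<Sum>e\<in>F. snd (snd e))"
  unfolding cut_value_def by (rule sum_mono2) (use assms in auto)

definition limited :: "nat \<Rightarrow> nat \<Rightarrow> real \<Rightarrow> real \<Rightarrow> nat \<Rightarrow> bool" where
  "limited d h \<alpha> \<beta> t \<longleftrightarrow> real (d+h-t) * \<beta> < \<alpha>"

definition paid_edges :: "nat \<Rightarrow> nat \<Rightarrow> nat \<Rightarrow> real \<Rightarrow> real \<Rightarrow> nat \<Rightarrow> (vtx \<times> vtx \<times> ereal) set" where
  "paid_edges n d h \<alpha> \<beta> t =
     (if limited d h \<alpha> \<beta> t
      then (\<lambda>x. (Out x, In (n+t), ereal \<beta>)) ` {Suc t..<Suc d} \<union> (\<lambda>r. (ROut r, In (n+t), ereal \<beta>)) ` {..<h}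
      else {(In (n+t), Out (n+t), ereal \<alpha>)})"

definition collector_side :: "nat \<Rightarrow> nat \<Rightarrow> nat \<Rightarrow> nat \<Rightarrow> real \<Rightarrow> real \<Rightarrow> vtx set" where
  "collector_side n k d h \<alpha> \<beta> =
     insert DC (Out ` {n..<n+k} \<union> In ` ((+) n ` {t. t < k \<and> limited d h \<alpha> \<beta> t}))"

lemma paid_edges_cost:
  assumes "t < d"
  shows "(\<Sum>e\<in>paid_edges n d h \<alpha> \<beta> t. snd (snd e)) = ereal (min \<alpha> (real (d + h - t) * \<beta>))"
proof (cases "limited d h \<alpha> \<beta> t")
  case False
  then show ?thesis unfolding paid_edges_def limited_def by simp
next
  case True
  let ?H = "(\<lambda>x. (Out x, In (n+t), ereal \<beta>)) ` {Suc t..<Suc d}"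
  let ?R = "(\<lambda>r. (ROut r, In (n+t), ereal \<beta>)) ` {..<h}"
  have helper_cost: "(\<Sum>e\<in>?H. snd (snd e)) = ereal (real (d - t) * \<beta>)"
    by (subst sum.reindex) (auto simp: inj_on_def sum_ereal[symmetric])
  have repair_cost: "(\<Sum>e\<in>?R. snd (snd e)) = ereal (real h * \<beta>)"
    by (subst sum.reindex) (auto simp: inj_on_def sum_ereal[symmetric])
  have "?H \<inter> ?R = {}" by auto
  then have "(\<Sum>e\<in>paid_edges n d h \<alpha> \<beta> t. snd (snd e)) = (\<Sum>e\<in>?H. snd (snd e)) + (\<Sum>e\<in>?R. snd (snd e))"
    unfolding paid_edges_def using True by (simp add: sum.union_disjoint)
  also have "\<dots> = ereal (real (d + h - t) * \<beta>)"
    using helper_cost repair_cost assms by (simp add: of_nat_diff algebra_simps)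
  finally show ?thesis using True unfolding limited_def by simp
qed

lemma edge_into_DC:
  "(u, DC, c) \<in> flow_edges n h \<alpha> \<alpha>' \<beta> seq K \<Longrightarrow> u \<in> Out ` K"
  unfolding flow_edges_def by auto

lemma edge_into_Out:
  "(u, Out x, c) \<in> flow_edges n h \<alpha> \<alpha>' \<beta> seq K \<Longrightarrow> u = In x \<and> c = ereal \<alpha>"
  unfolding flow_edges_def by auto

lemma edge_into_newcomer:
  assumes "(u, In (n+t), c) \<in> flow_edges n h \<alpha> \<alpha>' \<beta> seq K"
  shows "((\<exists>x\<in>snd (seq ! t). u = Out x) \<or> (\<exists>r<h. u = ROut r)) \<and> c = ereal \<beta>"
  using assms unfolding flow_edges_def by auto

text \<open>Edges into DC start at newcomer outputs, and
  downloads from earlier newcomers stay inside the collector side.\<close>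
lemma crossing_edges_paid:
  "{e \<in> flow_edges n h \<alpha> \<alpha>' \<beta> (staircase n d k) {n..<n+k}.
      fst e \<in> - collector_side n k d h \<alpha> \<beta> \<and> fst (snd e) \<notin> - collector_side n k d h \<alpha> \<beta>}
    \<subseteq> (\<Union>t<k. paid_edges n d h \<alpha> \<beta> t)"
proof
  let ?C = "collector_side n k d h \<alpha> \<beta>"
  fix e
  assume "e \<in> {e \<in> flow_edges n h \<alpha> \<alpha>' \<beta> (staircase n d k) {n..<n+k}.
                 fst e \<in> - ?C \<and> fst (snd e) \<notin> - ?C}"
  then obtain u v c where e: "e = (u, v, c)"
    and edge: "(u, v, c) \<in> flow_edges n h \<alpha> \<alpha>' \<beta> (staircase n d k) {n..<n+k}"
    and tail: "u \<notin> ?C" and head: "v \<in> ?C"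
    by (cases e) auto
  have newcomers: "{n..<n+k} = (+) n ` {..<k}"
    by (simp add: lessThan_atLeast0 add.commute)
  from head consider "v = DC" | j where "j < k" "v = Out (n+j)"
    | t where "t < k" "limited d h \<alpha> \<beta> t" "v = In (n+t)"
    unfolding collector_side_def newcomers by blast
  then have "(u, v, c) \<in> (\<Union>t<k. paid_edges n d h \<alpha> \<beta> t)"
  proof cases
    case 1
    then show ?thesis
      using edge_into_DC edge tail unfolding collector_side_def by auto
  next
    case (2 j)
    then have "u = In (n+j)" "c = ereal \<alpha>"
      using edge_into_Out edge by auto
    with tail 2 have "\<not> limited d h \<alpha> \<beta> j"
      unfolding collector_side_def by auto
    with 2 \<open>u = In (n+j)\<close> \<open>c = ereal \<alpha>\<close> show ?thesis
      unfolding paid_edges_def by auto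
  next
    case (3 t)
    have "snd (staircase n d k ! t) = helpers n d t"
      using \<open>t < k\<close> unfolding staircase_def by simp
    moreover from edge have "(u, In (n+t), c) \<in> flow_edges n h \<alpha> \<alpha>' \<beta> (staircase n d k) {n..<n+k}"
      using \<open>v = In (n+t)\<close> by simp
    ultimately have "((\<exists>x\<in>helpers n d t. u = Out x) \<or> (\<exists>r<h. u = ROut r)) \<and> c = ereal \<beta>"
      using edge_into_newcomer by metis
    moreover have "u \<notin> Out ` {n..<n+t}"
      using tail \<open>t < k\<close> unfolding collector_side_def by auto
    ultimately show ?thesis
      using 3 unfolding paid_edges_def helpers_def by auto
  qed
  with e show "e \<in> (\<Union>t<k. paid_edges n d h \<alpha> \<beta> t)" by simp
qed

lemma staircase_min_cut:
  assumes "k \<le> d" "0 \<le> \<alpha>" "0 \<le> \<beta>"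
  shows "min_cut (flow_edges n h \<alpha> \<alpha>' \<beta> (staircase n d k) {n..<n+k})
           \<le> ereal (\<Sum>t<k. min \<alpha> (real (d + h - t) * \<beta>))"
proof -
  let ?E = "flow_edges n h \<alpha> \<alpha>' \<beta> (staircase n d k) {n..<n+k}"
  let ?S = "- collector_side n k d h \<alpha> \<beta>"
  let ?P = "paid_edges n d h \<alpha> \<beta>"
  have finite_paid: "finite (?P t)" for t
    unfolding paid_edges_def by simp
  have "min_cut ?E \<le> cut_value ?E ?S"
    by (rule min_cut_le_cut_value) (auto simp: collector_side_def)
  also have "\<dots> \<le> (\<Sum>e\<in>(\<Union>t<k. ?P t). snd (snd e))"
    by (rule cut_value_le_sum[OF crossing_edges_paid])
       (use finite_paid assms in \<open>auto simp: paid_edges_def split: if_splits\<close>)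
  also have "\<dots> = (\<Sum>t<k. \<Sum>e\<in>?P t. snd (snd e))"
    by (rule sum.UNION_disjoint) (auto simp: finite_paid paid_edges_def split: if_splits)
  also have "\<dots> = (\<Sum>t<k. ereal (min \<alpha> (real (d + h - t) * \<beta>)))"
    using paid_edges_cost assms(1) by simp
  also have "\<dots> = ereal (\<Sum>t<k. min \<alpha> (real (d + h - t) * \<beta>))"
    by (rule sum_ereal)
  finally show ?thesis .
qed

theorem proposition2:
  fixes n k d h :: nat and \<alpha> \<alpha>' \<beta> M :: real
  assumes "1 \<le> k" and "k \<le> d" and "d \<le> n - 1"
    and "0 \<le> \<alpha>'" and "\<alpha>' < \<alpha>" and "0 \<le> \<beta>"
  shows "(\<exists>seq K. valid_seq n d seq \<and> length seq = k \<and> K \<subseteq> active n seq \<and> card K = k \<and>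
            min_cut (flow_edges n h \<alpha> \<alpha>' \<beta> seq K)
              \<le> ereal (\<Sum>i<k. min \<alpha> (real (d + h - i) * \<beta>)))
       \<and> ((\<forall>seq K. valid_seq n d seq \<and> K \<subseteq> active n seq \<and> card K = k \<longrightarrow>
              ereal M \<le> min_cut (flow_edges n h \<alpha> \<alpha>' \<beta> seq K))
           \<longrightarrow> M \<le> (\<Sum>i<k. min \<alpha> (real (d + h - i) * \<beta>)))"
proof -
  let ?seq = "staircase n d k" and ?K = "{n..<n+k}"
  let ?bound = "\<Sum>i<k. min \<alpha> (real (d + h - i) * \<beta>)"
  have "d < n" using assms(1-3) by linarith
  then have valid: "valid_seq n d ?seq" and collector_ok: "?K \<subseteq> active n ?seq"
    using staircase_valid[OF assms(2)] by auto
  have cut: "min_cut (flow_edges n h \<alpha> \<alpha>' \<beta> ?seq ?K) \<le> ereal ?bound"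
    using staircase_min_cut[OF assms(2)] assms(4-6) by simp
  moreover have "length ?seq = k" "card ?K = k"
    unfolding staircase_def by simp_all
  ultimately have "\<exists>seq K. valid_seq n d seq \<and> length seq = k \<and> K \<subseteq> active n seq \<and> card K = k \<and>
            min_cut (flow_edges n h \<alpha> \<alpha>' \<beta> seq K) \<le> ereal ?bound"
    using valid collector_ok by blast
  moreover have "M \<le> ?bound"
    if "\<forall>seq K. valid_seq n d seq \<and> K \<subseteq> active n seq \<and> card K = k \<longrightarrow>
          ereal M \<le> min_cut (flow_edges n h \<alpha> \<alpha>' \<beta> seq K)"
  proof -
    have "ereal M \<le> min_cut (flow_edges n h \<alpha> \<alpha>' \<beta> ?seq ?K)"
      using that valid collector_ok \<open>card ?K = k\<close> by blast
    then have "ereal M \<le> ereal ?bound" using cut by (rule order_trans)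
    then show ?thesis by simp
  qed
  ultimately show ?thesis by blast
qed

end
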